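(* Assume $z_1,z_2\in D$ are in the same chart. If $f$ satisfies the rate conditions of order $0$ and $z_1\in J_{cu}(z_2,L)$, then $\|\pi_{(\lambda,x)}(f(z_1)-f(z_2))\|\ge\xi_{cu,1,P}\|\pi_{(\lambda,x)}(z_1-z_2)\|$.
   Context: $c,u,s$ positive integers, $\Lambda=(\mathbb{R}/\mathbb{Z})^c$, $R_\Lambda=\tfrac12$; points are "in the same chart" if their $\lambda$-components have lifts to $\mathbb{R}^c$ at distance $\le R_\Lambda$; differences, norms, cones and derivatives are computed in such lifts. $\overline B_n(R)$ closed ball at $0$; Euclidean norms. $0<R<R_\Lambda/2$, $D=\Lambda\times\overline B_u(R)\times\overline B_s(R)$, $z=(\lambda,x,y)$, projections $\pi_\lambda,\pi_x,\pi_y,\pi_{(\lambda,x)}$; $f:D\to\Lambda\times\mathbb{R}^u\times\mathbb{R}^s$ is $C^1$, $f=(f_\lambda,f_x,f_y)$. $m(A)=\max\{c:\|Av\|\ge c\|v\|\}$, $m(\mathbf A)=\inf_{A\in\mathbf A}m(A)$; $[\partial g/\partial w(U)]$ = set of matrices with $(i,j)$ entry in $[\inf_U\partial g_i/\partial w_j,\sup_U\partial g_i/\partial w_j]$; $P(z)=\{w\in D:\|\pi_\lambda w-\pi_\lambda z\|\le R_\Lambda/2\}$. Fix $L\in(2R/R_\Lambda,1)$. $\mu_{s,1}=\sup_D\{\|\partial_yf_y\|+\frac1L\|\partial_{(\lambda,x)}f_y\|\}$, $\xi_{u,1,P}=\inf_{z\in D}m[\partial_xf_x(P(z))]-\frac1L\sup_D\|\partial_{(\lambda,y)}f_x\|$,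 $\mu_{cs,1}=\sup_D\{\|\partial_{(\lambda,y)}f_{(\lambda,y)}\|+L\|\partial_xf_{(\lambda,y)}\|\}$, $\xi_{cu,1,P}=\inf_{z\in D}m[\partial_{(\lambda,x)}f_{(\lambda,x)}(P(z))]-L\sup_D\|\partial_yf_{(\lambda,x)}\|$. Rate conditions of order $0$: $\mu_{s,1}<1<\xi_{u,1,P}$, $\mu_{cs,1}<\xi_{u,1,P}$, $\mu_{s,1}<\xi_{cu,1,P}$. $J_{cu}(z,M)=\{(\lambda,x,y):\|y-\pi_yz\|<M\|(\lambda,x)-\pi_{(\lambda,x)}z\|\}\cup\{z\}$. *)

theory Defs
  imports "HOL-Analysis.Analysis"
begin

text \<open>Points of D are represented by lifts (lambda, x, y) in R^c x R^u x R^s.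
  The torus Lambda = (R/Z)^c is handled by working in the universal cover R^c;
  the map f is represented by a lift F which is compatible with the deck
  transformations (see the periodicity hypothesis of the theorem).\<close>

type_synonym ('c,'u,'s) pt = "(real^'c) \<times> (real^'u) \<times> (real^'s)"

definition R_Lambda :: real where "R_Lambda = 1/2"

text \<open>Lift of D = Lambda x closed ball_u(R) x closed ball_s(R).\<close>
definition cyl :: "real \<Rightarrow> ('c::finite,'u::finite,'s::finite) pt set" where
  "cyl R = {z. norm (fst (snd z)) \<le> R \<and> norm (snd (snd z)) \<le> R}"

definition Pset :: "real \<Rightarrow> ('c::finite,'u::finite,'s::finite) pt \<Rightarrow> ('c,'u,'s) pt set" where
  "Pset R z = {w \<in> cyl R. norm (fst w - fst z) \<le> R_Lambda / 2}"

definition pr_lx :: "('c::finite,'u::finite,'s::finite) pt \<Rightarrow> (real^'c) \<times> (real^'u)" where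
  "pr_lx z = (fst z, fst (snd z))"

definition pr_ly :: "('c::finite,'u::finite,'s::finite) pt \<Rightarrow> (real^'c) \<times> (real^'s)" where
  "pr_ly z = (fst z, snd (snd z))"

definition d_y_fy :: "(('c::finite,'u::finite,'s::finite) pt \<Rightarrow> ('c,'u,'s) pt \<Rightarrow>\<^sub>L ('c,'u,'s) pt)
    \<Rightarrow> ('c,'u,'s) pt \<Rightarrow> real^'s \<Rightarrow> real^'s" where
  "d_y_fy F' z = (\<lambda>v. snd (snd (blinfun_apply (F' z) (0, 0, v))))"

definition d_lx_fy :: "(('c::finite,'u::finite,'s::finite) pt \<Rightarrow> ('c,'u,'s) pt \<Rightarrow>\<^sub>L ('c,'u,'s) pt)
    \<Rightarrow> ('c,'u,'s) pt \<Rightarrow> (real^'c) \<times> (real^'u) \<Rightarrow> real^'s" where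
  "d_lx_fy F' z = (\<lambda>v. snd (snd (blinfun_apply (F' z) (fst v, snd v, 0))))"

definition d_x_fx :: "(('c::finite,'u::finite,'s::finite) pt \<Rightarrow> ('c,'u,'s) pt \<Rightarrow>\<^sub>L ('c,'u,'s) pt)
    \<Rightarrow> ('c,'u,'s) pt \<Rightarrow> real^'u \<Rightarrow> real^'u" where
  "d_x_fx F' z = (\<lambda>v. fst (snd (blinfun_apply (F' z) (0, v, 0))))"

definition d_ly_fx :: "(('c::finite,'u::finite,'s::finite) pt \<Rightarrow> ('c,'u,'s) pt \<Rightarrow>\<^sub>L ('c,'u,'s) pt)
    \<Rightarrow> ('c,'u,'s) pt \<Rightarrow> (real^'c) \<times> (real^'s) \<Rightarrow> real^'u" where
  "d_ly_fx F' z = (\<lambda>v. fst (snd (blinfun_apply (F' z) (fst v, 0, snd v))))"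

definition d_ly_fly :: "(('c::finite,'u::finite,'s::finite) pt \<Rightarrow> ('c,'u,'s) pt \<Rightarrow>\<^sub>L ('c,'u,'s) pt)
    \<Rightarrow> ('c,'u,'s) pt \<Rightarrow> (real^'c) \<times> (real^'s) \<Rightarrow> (real^'c) \<times> (real^'s)" where
  "d_ly_fly F' z = (\<lambda>v. pr_ly (blinfun_apply (F' z) (fst v, 0, snd v)))"

definition d_x_fly :: "(('c::finite,'u::finite,'s::finite) pt \<Rightarrow> ('c,'u,'s) pt \<Rightarrow>\<^sub>L ('c,'u,'s) pt)
    \<Rightarrow> ('c,'u,'s) pt \<Rightarrow> real^'u \<Rightarrow> (real^'c) \<times> (real^'s)" where
  "d_x_fly F' z = (\<lambda>v. pr_ly (blinfun_apply (F' z) (0, v, 0)))"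

definition d_lx_flx :: "(('c::finite,'u::finite,'s::finite) pt \<Rightarrow> ('c,'u,'s) pt \<Rightarrow>\<^sub>L ('c,'u,'s) pt)
    \<Rightarrow> ('c,'u,'s) pt \<Rightarrow> (real^'c) \<times> (real^'u) \<Rightarrow> (real^'c) \<times> (real^'u)" where
  "d_lx_flx F' z = (\<lambda>v. pr_lx (blinfun_apply (F' z) (fst v, snd v, 0)))"

definition d_y_flx :: "(('c::finite,'u::finite,'s::finite) pt \<Rightarrow> ('c,'u,'s) pt \<Rightarrow>\<^sub>L ('c,'u,'s) pt)
    \<Rightarrow> ('c,'u,'s) pt \<Rightarrow> real^'s \<Rightarrow> (real^'c) \<times> (real^'u)" where
  "d_y_flx F' z = (\<lambda>v. pr_lx (blinfun_apply (F' z) (0, 0, v)))"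

text \<open>Matrices (w.r.t. the standard orthonormal bases) as entry functions M i j,
  i an output basis vector, j an input basis vector.\<close>
definition mat_apply :: "('w::euclidean_space \<Rightarrow> 'v::euclidean_space \<Rightarrow> real) \<Rightarrow> 'v \<Rightarrow> 'w" where
  "mat_apply M v = (\<Sum>i\<in>Basis. (\<Sum>j\<in>Basis. M i j * (v \<bullet> j)) *\<^sub>R i)"

definition min_norm :: "('v::real_normed_vector \<Rightarrow> 'w::real_normed_vector) \<Rightarrow> real" where
  "min_norm A = Sup {c. \<forall>v. c * norm v \<le> norm (A v)}"

definition min_norm_set :: "('w::euclidean_space \<Rightarrow> 'v::euclidean_space \<Rightarrow> real) set \<Rightarrow> real" where
  "min_norm_set S = (INF M\<in>S. min_norm (mat_apply M))"

text \<open>Interval matrix [dg/dw(U)]: entry (i,j) lies between the inf and sup over U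
  of the partial derivative dg_i/dw_j.\<close>
definition interval_mat :: "('a \<Rightarrow> 'v::euclidean_space \<Rightarrow> 'w::euclidean_space) \<Rightarrow> 'a set
    \<Rightarrow> ('w \<Rightarrow> 'v \<Rightarrow> real) set" where
  "interval_mat B U = {M. \<forall>i\<in>Basis. \<forall>j\<in>Basis.
      (INF w\<in>U. B w j \<bullet> i) \<le> M i j \<and> M i j \<le> (SUP w\<in>U. B w j \<bullet> i)}"

definition mu_s :: "real \<Rightarrow> real \<Rightarrow> (('c::finite,'u::finite,'s::finite) pt \<Rightarrow> ('c,'u,'s) pt \<Rightarrow>\<^sub>L ('c,'u,'s) pt) \<Rightarrow> real" where
  "mu_s R L F' = (SUP z\<in>cyl R. onorm (d_y_fy F' z) + (1/L) * onorm (d_lx_fy F' z))"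

definition xi_u :: "real \<Rightarrow> real \<Rightarrow> (('c::finite,'u::finite,'s::finite) pt \<Rightarrow> ('c,'u,'s) pt \<Rightarrow>\<^sub>L ('c,'u,'s) pt) \<Rightarrow> real" where
  "xi_u R L F' = (INF z\<in>cyl R. min_norm_set (interval_mat (d_x_fx F') (Pset R z)))
      - (1/L) * (SUP z\<in>cyl R. onorm (d_ly_fx F' z))"

definition mu_cs :: "real \<Rightarrow> real \<Rightarrow> (('c::finite,'u::finite,'s::finite) pt \<Rightarrow> ('c,'u,'s) pt \<Rightarrow>\<^sub>L ('c,'u,'s) pt) \<Rightarrow> real" where
  "mu_cs R L F' = (SUP z\<in>cyl R. onorm (d_ly_fly F' z) + L * onorm (d_x_fly F' z))"

definition xi_cu :: "real \<Rightarrow> real \<Rightarrow> (('c::finite,'u::finite,'s::finite) pt \<Rightarrow> ('c,'u,'s) pt \<Rightarrow>\<^sub>L ('c,'u,'s) pt) \<Rightarrow> real" where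
  "xi_cu R L F' = (INF z\<in>cyl R. min_norm_set (interval_mat (d_lx_flx F') (Pset R z)))
      - L * (SUP z\<in>cyl R. onorm (d_y_flx F' z))"

definition Jcu :: "('c::finite,'u::finite,'s::finite) pt \<Rightarrow> real \<Rightarrow> ('c,'u,'s) pt set" where
  "Jcu z M = {w. norm (snd (snd w) - snd (snd z)) < M * norm (pr_lx w - pr_lx z)} \<union> {z}"

end

theory Submission
  imports Defs
begin

text \<open>The (\<lambda>,x)-increment of F between z2 and z1 is the integral along the segment of
  the derivative applied to z1 - z2. Its \<partial>(\<lambda>,x) part is the averaged matrix applied to
  v = \<pi>(\<lambda>,x)(z1 - z2); every entry of that matrix lies between the inf and sup of the
  corresponding partial derivative over P of the midpoint (the segment stays in that chart),
  so its length is at least m[\<partial>(\<lambda>,x) f(\<lambda>,x) (P)] |v|. The \<partial>y part is at most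
  sup \<parallel>\<partial>y f(\<lambda>,x)\<parallel> |y1 - y2| \<le> L sup \<parallel>\<partial>y f(\<lambda>,x)\<parallel> |v| by the cone condition. What is needed is that the suprema and infima in \<xi>cu
  are over bounded sets (otherwise they are junk values): F' is bounded on the whole cylinder
  because F(w + (k,0)) - F w is continuous with values in the lattice \<int>^c \<times> {0}, hence constant,
  so F' is \<int>^c-periodic and its bound on a compact fundamental domain is global.\<close>

lemma min_norm_le:
  fixes A :: "'v::real_normed_vector \<Rightarrow> 'w::real_normed_vector"
  shows "min_norm A * norm v \<le> norm (A v)"
proof (cases "v = 0")
  case False
  have "min_norm A \<le> norm (A v) / norm v"
    unfolding min_norm_def
  proof (rule cSup_least)
    show "{c. \<forall>v. c * norm v \<le> norm (A v)} \<noteq> {}" by (auto intro!: exI[of _ 0])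
  qed (use False in \<open>auto simp: field_simps\<close>)
  then show ?thesis using False by (simp add: field_simps)
qed simp

lemma min_norm_nonneg:
  fixes A :: "'v::euclidean_space \<Rightarrow> 'w::real_normed_vector"
  shows "0 \<le> min_norm A"
proof -
  obtain b :: 'v where b: "b \<in> Basis" using nonempty_Basis by blast
  have "bdd_above {c. \<forall>v. c * norm v \<le> norm (A v)}"
  proof (rule bdd_aboveI)
    fix c assume "c \<in> {c. \<forall>v. c * norm v \<le> norm (A v)}"
    then have "c * norm b \<le> norm (A b)" by simp
    then show "c \<le> norm (A b)" using b by simp
  qed
  then show ?thesis unfolding min_norm_def by (rule cSup_upper[rotated]) simp
qed

lemma min_norm_set_le:
  fixes S :: "('w::euclidean_space \<Rightarrow> 'v::euclidean_space \<Rightarrow> real) set"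
  assumes "M \<in> S"
  shows "min_norm_set S \<le> min_norm (mat_apply M)"
  unfolding min_norm_set_def
  by (rule cINF_lower[OF _ assms]) (rule bdd_belowI2[where m=0], rule min_norm_nonneg)

lemma min_norm_set_nonneg:
  fixes S :: "('w::euclidean_space \<Rightarrow> 'v::euclidean_space \<Rightarrow> real) set"
  assumes "S \<noteq> {}"
  shows "0 \<le> min_norm_set S"
  unfolding min_norm_set_def by (rule cINF_greatest[OF assms]) (rule min_norm_nonneg)

lemma mat_apply_integral:
  fixes G :: "real \<Rightarrow> 'v::euclidean_space \<Rightarrow> 'w::euclidean_space"
  assumes lin: "\<And>t. linear (G t)" and cont: "\<And>x. continuous_on {a..b} (\<lambda>t. G t x)"
  shows "mat_apply (\<lambda>i j. integral {a..b} (\<lambda>t. G t j \<bullet> i)) v = integral {a..b} (\<lambda>t. G t v)"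
proof -
  have entries: "G t v \<bullet> i = (\<Sum>j\<in>Basis. (G t j \<bullet> i) * (v \<bullet> j))" for t i
  proof -
    have "G t v = G t (\<Sum>j\<in>Basis. (v \<bullet> j) *\<^sub>R j)" by (simp add: euclidean_representation)
    also have "\<dots> = (\<Sum>j\<in>Basis. (v \<bullet> j) *\<^sub>R G t j)"
      by (simp add: linear_sum[OF lin] linear_scale[OF lin] o_def)
    finally show ?thesis by (simp add: inner_sum_left mult.commute)
  qed
  have int: "(\<lambda>t. G t x \<bullet> i) integrable_on {a..b}" for x i
    by (intro integrable_continuous_real continuous_on_inner cont continuous_on_const)
  have component: "integral {a..b} (\<lambda>t. G t v) \<bullet> i
      = (\<Sum>j\<in>Basis. integral {a..b} (\<lambda>t. G t j \<bullet> i) * (v \<bullet> j))" if "i \<in> Basis" for i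
    using integral_component_eq[OF integrable_continuous_real[OF cont[of v]], of i, symmetric]
    by (simp add: entries integral_sum integrable_on_mult_left int integral_mult_left)
  have "integral {a..b} (\<lambda>t. G t v) = (\<Sum>i\<in>Basis. (integral {a..b} (\<lambda>t. G t v) \<bullet> i) *\<^sub>R i)"
    by (simp add: euclidean_representation)
  also have "\<dots> = mat_apply (\<lambda>i j. integral {a..b} (\<lambda>t. G t j \<bullet> i)) v"
    unfolding mat_apply_def by (intro sum.cong refl) (simp add: component)
  finally show ?thesis ..
qed

lemma interval_mat_average:
  fixes B :: "'a \<Rightarrow> 'v::euclidean_space \<Rightarrow> 'w::euclidean_space" and p :: "real \<Rightarrow> 'a"
  assumes path: "\<And>t. t \<in> {0..1} \<Longrightarrow> p t \<in> U"
    and bound: "\<And>w j. w \<in> U \<Longrightarrow> j \<in> Basis \<Longrightarrow> norm (B w j) \<le> K"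
    and cont: "\<And>x. continuous_on {0..1} (\<lambda>t. B (p t) x)"
  shows "(\<lambda>i j. integral {0..1} (\<lambda>t. B (p t) j \<bullet> i)) \<in> interval_mat B U"
  unfolding interval_mat_def
proof (intro CollectI ballI conjI)
  fix i :: 'w and j :: 'v assume ij: "i \<in> Basis" "j \<in> Basis"
  have entry: "\<bar>B w j \<bullet> i\<bar> \<le> K" if "w \<in> U" for w
    using Basis_le_norm[OF ij(1), of "B w j"] bound[OF that ij(2)] by simp
  have int: "(\<lambda>t. B (p t) j \<bullet> i) integrable_on {0..1}"
    by (intro integrable_continuous_real continuous_on_inner cont continuous_on_const)
  have "(INF w\<in>U. B w j \<bullet> i) \<le> B (p t) j \<bullet> i" if "t \<in> {0..1}" for t
    using entry by (intro cINF_lower[OF _ path[OF that]] bdd_belowI2[where m="-K"]) force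
  then show "(INF w\<in>U. B w j \<bullet> i) \<le> integral {0..1} (\<lambda>t. B (p t) j \<bullet> i)"
    using integral_le[OF integrable_const_ivl[of "INF w\<in>U. B w j \<bullet> i" 0 1] int] by simp
  have "B (p t) j \<bullet> i \<le> (SUP w\<in>U. B w j \<bullet> i)" if "t \<in> {0..1}" for t
    using entry by (intro cSUP_upper[OF path[OF that]] bdd_aboveI2[where M=K]) force
  then show "integral {0..1} (\<lambda>t. B (p t) j \<bullet> i) \<le> (SUP w\<in>U. B w j \<bullet> i)"
    using integral_le[OF int integrable_const_ivl[of "SUP w\<in>U. B w j \<bullet> i" 0 1]] by simp
qed

definition deck_periodic :: "real \<Rightarrow> (('c::finite,'u::finite,'s::finite) pt \<Rightarrow> ('c,'u,'s) pt) \<Rightarrow> bool" where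
  "deck_periodic R F \<longleftrightarrow> (\<forall>k l x y. (\<forall>i. k $ i \<in> \<int>) \<longrightarrow> norm x \<le> R \<longrightarrow> norm y \<le> R \<longrightarrow>
      (\<forall>i. (fst (F (l + k, x, y)) - fst (F (l, x, y))) $ i \<in> \<int>) \<and>
      snd (F (l + k, x, y)) = snd (F (l, x, y)))"

lemma cyl_eq_Times: "cyl R = UNIV \<times> cball 0 R \<times> cball 0 R"
  unfolding cyl_def by (auto simp: mem_Times_iff)

lemma convex_cyl: "convex (cyl R)"
  unfolding cyl_eq_Times by (intro convex_Times convex_cball convex_UNIV)

lemma interior_cyl: "interior (cyl R) = UNIV \<times> ball 0 R \<times> ball 0 R"
  unfolding cyl_eq_Times by (simp add: interior_Times)

lemma closure_interior_cyl: "0 < R \<Longrightarrow> closure (interior (cyl R)) = cyl R"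
  by (simp only: interior_cyl) (simp add: closure_Times cyl_eq_Times)

lemma cyl_translate: "w \<in> cyl R \<Longrightarrow> w + (k, 0) \<in> cyl R"
  unfolding cyl_def by auto

lemma continuous_integer_valued_constant:
  fixes g :: "'a::topological_space \<Rightarrow> real"
  assumes "connected S" "continuous_on S g" "\<And>x. x \<in> S \<Longrightarrow> g x \<in> \<int>"
  shows "g constant_on S"
proof (rule continuous_discrete_range_constant[OF assms(1,2)])
  fix x assume "x \<in> S"
  then show "\<exists>e>0. \<forall>y. y \<in> S \<and> g y \<noteq> g x \<longrightarrow> e \<le> norm (g y - g x)"
    using assms(3) Ints_nonzero_abs_ge1[of "g _ - g x"] by (intro exI[of _ 1]) auto
qed

lemma deck_difference_constant:
  fixes F :: "('c::finite,'u::finite,'s::finite) pt \<Rightarrow> ('c,'u,'s) pt"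
  assumes periodic: "deck_periodic R F" and cont: "continuous_on (cyl R) F"
    and k: "\<forall>i. k $ i \<in> \<int>" and w: "w \<in> cyl R" and w': "w' \<in> cyl R"
  shows "F (w + (k, 0)) - F w = F (w' + (k, 0)) - F w'"
proof -
  define G where "G w = F (w + (k, 0)) - F w" for w :: "('c,'u,'s) pt"
  have lattice: "(\<forall>i. fst (G w) $ i \<in> \<int>) \<and> snd (G w) = 0" if "w \<in> cyl R" for w
    using that periodic k unfolding G_def deck_periodic_def cyl_def
    by (cases w) (auto simp: add.commute)
  have "continuous_on (cyl R) G"
    unfolding G_def using cyl_translate
    by (intro continuous_intros continuous_on_compose2[OF cont] cont) auto
  then have "(\<lambda>w. fst (G w) $ i) constant_on cyl R" for i
    using lattice by (intro continuous_integer_valued_constant convex_connected convex_cyl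
        continuous_intros) auto
  then have "fst (G w) $ i = fst (G w') $ i" for i
    using w w' unfolding constant_on_def by metis
  then have "fst (G w) = fst (G w')" by (simp add: vec_eq_iff)
  then show ?thesis using lattice[OF w] lattice[OF w'] unfolding G_def by (simp add: prod_eq_iff)
qed

lemma deck_periodic_derivative:
  fixes F :: "('c::finite,'u::finite,'s::finite) pt \<Rightarrow> ('c,'u,'s) pt"
    and F' :: "('c,'u,'s) pt \<Rightarrow> ('c,'u,'s) pt \<Rightarrow>\<^sub>L ('c,'u,'s) pt"
  assumes R: "0 < R"
    and deriv: "\<forall>z\<in>cyl R. (F has_derivative blinfun_apply (F' z)) (at z within cyl R)"
    and cont: "continuous_on (cyl R) F'"
    and periodic: "deck_periodic R F"
    and k: "\<forall>i. k $ i \<in> \<int>" and w: "w \<in> cyl R"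
  shows "F' (w + (k, 0)) = F' w"
proof -
  define U :: "('c,'u,'s) pt set" where "U = interior (cyl R)"
  define G where "G w = F (w + (k, 0)) - F w" for w :: "('c,'u,'s) pt"
  have contF: "continuous_on (cyl R) F"
    using deriv by (intro has_derivative_continuous_on) auto
  have "F' (v + (k, 0)) - F' v = 0" if v: "v \<in> U" for v :: "('c,'u,'s) pt"
  proof -
    have vk: "v + (k, 0) \<in> U" using v unfolding U_def interior_cyl by auto
    have dF: "(F has_derivative blinfun_apply (F' y)) (at y)" if "y \<in> U" for y
    proof -
      have "(F has_derivative blinfun_apply (F' y)) (at y within cyl R)"
        using deriv that interior_subset[of "cyl R"] unfolding U_def by blast
      then show ?thesis using that at_within_interior[of y "cyl R"] unfolding U_def by simp
    qed
    have "((\<lambda>y. y + (k, 0)) has_derivative (\<lambda>h. h)) (at v)"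
      by (intro derivative_eq_intros) auto
    from has_derivative_compose[OF this dF[OF vk]]
    have "(G has_derivative (\<lambda>h. F' (v + (k, 0)) h - F' v h)) (at v)"
      unfolding G_def by (intro has_derivative_diff dF v)
    moreover have "(G has_derivative (\<lambda>h. 0)) (at v)"
    proof (rule has_derivative_transform_within_open[OF has_derivative_const _ v])
      show "open U" unfolding U_def by simp
      fix y assume "y \<in> U"
      then show "G v = G y"
        using deck_difference_constant[OF periodic contF k] v interior_subset[of "cyl R"]
        unfolding U_def G_def by (meson subsetD)
    qed
    ultimately have "(\<lambda>h. F' (v + (k, 0)) h - F' v h) = (\<lambda>h. 0)"
      by (rule has_derivative_unique)
    then show ?thesis by (intro blinfun_eqI) (simp add: blinfun.diff_left fun_eq_iff split_paired_all)
  qed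
  moreover have "continuous_on (closure U) (\<lambda>w. F' (w + (k, 0)) - F' w)"
    unfolding U_def closure_interior_cyl[OF R] using cyl_translate
    by (intro continuous_intros continuous_on_compose2[OF cont] cont) auto
  ultimately have "F' (w + (k, 0)) - F' w = 0"
    using continuous_constant_on_closure[of U] w closure_interior_cyl[OF R] unfolding U_def by blast
  then show ?thesis by simp
qed

lemma deck_periodic_derivative_bounded:
  fixes F :: "('c::finite,'u::finite,'s::finite) pt \<Rightarrow> ('c,'u,'s) pt"
    and F' :: "('c,'u,'s) pt \<Rightarrow> ('c,'u,'s) pt \<Rightarrow>\<^sub>L ('c,'u,'s) pt"
  assumes R: "0 < R"
    and deriv: "\<forall>z\<in>cyl R. (F has_derivative blinfun_apply (F' z)) (at z within cyl R)"
    and cont: "continuous_on (cyl R) F'"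
    and periodic: "deck_periodic R F"
  obtains B where "\<And>z. z \<in> cyl R \<Longrightarrow> norm (F' z) \<le> B"
proof -
  define K :: "('c,'u,'s) pt set" where "K = cbox 0 1 \<times> cball 0 R \<times> cball 0 R"
  have "compact K" unfolding K_def by (intro compact_Times compact_cbox compact_cball)
  moreover have "K \<subseteq> cyl R" unfolding K_def cyl_eq_Times by auto
  ultimately have "compact (F' ` K)"
    by (intro compact_continuous_image continuous_on_subset[OF cont])
  then obtain B where B: "\<And>w. w \<in> K \<Longrightarrow> norm (F' w) \<le> B"
    using compact_imp_bounded bounded_iff by (metis image_eqI)
  show thesis
  proof
    fix z :: "('c,'u,'s) pt" assume z: "z \<in> cyl R"
    define k :: "real^'c" where "k = (\<chi> i. - of_int \<lfloor>fst z $ i\<rfloor>)"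
    have k: "\<forall>i. k $ i \<in> \<int>" unfolding k_def by simp
    have "z + (k, 0) \<in> K"
      using z unfolding K_def cyl_eq_Times k_def
      by (cases z) (auto simp: mem_box_cart mem_Times_iff, linarith+)
    then show "norm (F' z) \<le> B"
      using B deck_periodic_derivative[OF R deriv cont periodic k z] by metis
  qed
qed

lemma pr_lx_diff: "pr_lx (z - w) = pr_lx z - pr_lx w"
  unfolding pr_lx_def by simp

lemma bounded_linear_pr_lx: "bounded_linear pr_lx"
  unfolding pr_lx_def
  by (intro bounded_linear_Pair bounded_linear_fst bounded_linear_compose[OF bounded_linear_fst bounded_linear_snd])

lemma norm_pr_lx_le: "norm (pr_lx z) \<le> norm z"
  by (cases z) (simp add: pr_lx_def norm_Pair)

lemma bounded_linear_d_lx_flx: "bounded_linear (d_lx_flx F' w)"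
  unfolding d_lx_flx_def
  by (intro bounded_linear_compose[OF bounded_linear_pr_lx] bounded_linear_compose[OF blinfun.bounded_linear_right]
      bounded_linear_Pair bounded_linear_fst bounded_linear_snd bounded_linear_zero)

lemma bounded_linear_d_y_flx: "bounded_linear (d_y_flx F' w)"
  unfolding d_y_flx_def
  by (intro bounded_linear_compose[OF bounded_linear_pr_lx] bounded_linear_compose[OF blinfun.bounded_linear_right]
      bounded_linear_Pair bounded_linear_ident bounded_linear_zero)

lemma norm_d_lx_flx_le:
  fixes F' :: "('c::finite,'u::finite,'s::finite) pt \<Rightarrow> ('c,'u,'s) pt \<Rightarrow>\<^sub>L ('c,'u,'s) pt"
  shows "norm (d_lx_flx F' w v) \<le> norm (F' w) * norm v"
proof -
  have "norm (d_lx_flx F' w v) \<le> norm (F' w (fst v, snd v, 0))"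
    unfolding d_lx_flx_def by (rule norm_pr_lx_le)
  also have "\<dots> \<le> norm (F' w) * norm (fst v, snd v, 0::real^'s)" by (rule norm_blinfun)
  finally show ?thesis by (cases v) (simp add: norm_Pair)
qed

lemma norm_d_y_flx_le:
  fixes F' :: "('c::finite,'u::finite,'s::finite) pt \<Rightarrow> ('c,'u,'s) pt \<Rightarrow>\<^sub>L ('c,'u,'s) pt"
  shows "norm (d_y_flx F' w v) \<le> norm (F' w) * norm v"
proof -
  have "norm (d_y_flx F' w v) \<le> norm (F' w (0, 0, v))"
    unfolding d_y_flx_def by (rule norm_pr_lx_le)
  also have "\<dots> \<le> norm (F' w) * norm (0::real^'c, 0::real^'u, v)" by (rule norm_blinfun)
  finally show ?thesis by (simp add: norm_Pair)
qed

lemma continuous_on_d_lx_flx: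
  "continuous_on S (\<lambda>t. F' (p t)) \<Longrightarrow> continuous_on S (\<lambda>t. d_lx_flx F' (p t) v)"
  unfolding d_lx_flx_def pr_lx_def by (intro continuous_intros blinfun.continuous_on) auto

lemma continuous_on_d_y_flx:
  "continuous_on S (\<lambda>t. F' (p t)) \<Longrightarrow> continuous_on S (\<lambda>t. d_y_flx F' (p t) v)"
  unfolding d_y_flx_def pr_lx_def by (intro continuous_intros blinfun.continuous_on) auto

lemma Jcu_cone:
  assumes "w \<in> Jcu z M"
  shows "norm (snd (snd w) - snd (snd z)) \<le> M * norm (pr_lx w - pr_lx z)"
  using assms unfolding Jcu_def by (cases "w = z") auto

lemma segment_in_cyl:
  assumes "z1 \<in> cyl R" "z2 \<in> cyl R" "t \<in> {0..1}"
  shows "z2 + t *\<^sub>R (z1 - z2) \<in> cyl R"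
proof -
  have "z2 + t *\<^sub>R (z1 - z2) = (1 - t) *\<^sub>R z2 + t *\<^sub>R z1" by (simp add: algebra_simps)
  then show ?thesis using convexD[OF convex_cyl assms(2,1), of "1 - t" t] assms(3) by simp
qed

lemma segment_in_Pset_midpoint:
  assumes z1: "z1 \<in> cyl R" and z2: "z2 \<in> cyl R"
    and chart: "norm (fst z1 - fst z2) \<le> R_Lambda" and t: "t \<in> {0..1}"
  shows "z2 + t *\<^sub>R (z1 - z2) \<in> Pset R (z2 + (1/2) *\<^sub>R (z1 - z2))"
proof -
  have "z2 + t *\<^sub>R (z1 - z2) \<in> cyl R" by (rule segment_in_cyl[OF z1 z2 t])
  moreover have "norm (fst (z2 + t *\<^sub>R (z1 - z2)) - fst (z2 + (1/2) *\<^sub>R (z1 - z2)))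
      = \<bar>t - 1/2\<bar> * norm (fst z1 - fst z2)"
    by (simp flip: scaleR_diff_left)
  moreover have "\<dots> \<le> (1/2) * R_Lambda"
    using t chart by (intro mult_mono) (auto split: abs_split)
  ultimately show ?thesis unfolding Pset_def by simp
qed

lemma pr_lx_blinfun_split:
  "pr_lx (blinfun_apply (F' w) d) = d_lx_flx F' w (pr_lx d) + d_y_flx F' w (snd (snd d))"
proof -
  have "d = (fst d, fst (snd d), 0) + (0, 0, snd (snd d))" by simp
  then have "blinfun_apply (F' w) d = F' w (fst d, fst (snd d), 0) + F' w (0, 0, snd (snd d))"
    by (metis blinfun.add_right)
  then show ?thesis unfolding d_lx_flx_def d_y_flx_def pr_lx_def by simp
qed

lemma lx_increment_integral:
  fixes F :: "('c::finite,'u::finite,'s::finite) pt \<Rightarrow> ('c,'u,'s) pt"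
    and F' :: "('c,'u,'s) pt \<Rightarrow> ('c,'u,'s) pt \<Rightarrow>\<^sub>L ('c,'u,'s) pt"
  assumes deriv: "\<forall>z\<in>cyl R. (F has_derivative blinfun_apply (F' z)) (at z within cyl R)"
    and cont: "continuous_on (cyl R) F'"
    and z1: "z1 \<in> cyl R" and z2: "z2 \<in> cyl R"
  defines "p t \<equiv> z2 + t *\<^sub>R (z1 - z2)"
  shows "pr_lx (F z1) - pr_lx (F z2)
    = integral {0..1} (\<lambda>t. d_lx_flx F' (p t) (pr_lx (z1 - z2)))
      + integral {0..1} (\<lambda>t. d_y_flx F' (p t) (snd (snd (z1 - z2))))"
proof -
  have seg: "p t \<in> cyl R" if "t \<in> {0..1}" for t
    using segment_in_cyl[OF z1 z2 that] unfolding p_def .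
  have "continuous_on {0..1} (\<lambda>t. F' (p t))"
    unfolding p_def using seg
    by (intro continuous_on_compose2[OF cont] continuous_intros) (auto simp: p_def)
  then have int: "(\<lambda>t. d_lx_flx F' (p t) v) integrable_on {0..1}"
    "(\<lambda>t. d_y_flx F' (p t) u) integrable_on {0..1}" for v u
    by (intro integrable_continuous_real continuous_on_d_lx_flx continuous_on_d_y_flx; simp)+
  have "pr_lx (F (z2 + (z1 - z2))) - pr_lx (F z2) = integral {0..1} (\<lambda>t. pr_lx (F' (p t) (z1 - z2)))"
    unfolding p_def using deriv seg[unfolded p_def]
    by (intro mvt_integral[of "cyl R"] bounded_linear.has_derivative[OF bounded_linear_pr_lx]) auto
  also have "\<dots> = integral {0..1} (\<lambda>t. d_lx_flx F' (p t) (pr_lx (z1 - z2))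
      + d_y_flx F' (p t) (snd (snd (z1 - z2))))"
    by (simp only: pr_lx_blinfun_split)
  finally show ?thesis using int by (simp add: integral_add)
qed

lemma norm_d_lx_flx_Basis_le:
  fixes F' :: "('c::finite,'u::finite,'s::finite) pt \<Rightarrow> ('c,'u,'s) pt \<Rightarrow>\<^sub>L ('c,'u,'s) pt"
  shows "j \<in> Basis \<Longrightarrow> norm (d_lx_flx F' w j) \<le> norm (F' w)"
  using norm_d_lx_flx_le[of F' w j] by simp

lemma min_norm_set_integral_d_lx_flx_le:
  fixes F' :: "('c::finite,'u::finite,'s::finite) pt \<Rightarrow> ('c,'u,'s) pt \<Rightarrow>\<^sub>L ('c,'u,'s) pt"
    and p :: "real \<Rightarrow> ('c,'u,'s) pt"
  assumes bound: "\<And>z. z \<in> U \<Longrightarrow> norm (F' z) \<le> B"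
    and path: "\<And>t. t \<in> {0..1} \<Longrightarrow> p t \<in> U"
    and cont: "continuous_on {0..1} (\<lambda>t. F' (p t))"
  shows "min_norm_set (interval_mat (d_lx_flx F') U) * norm v
    \<le> norm (integral {0..1} (\<lambda>t. d_lx_flx F' (p t) v))"
proof -
  define A where "A i j = integral {0..1} (\<lambda>t. d_lx_flx F' (p t) j \<bullet> i)" for i j
  have "A \<in> interval_mat (d_lx_flx F') U"
    unfolding A_def
  proof (rule interval_mat_average[where K=B])
    show "norm (d_lx_flx F' w j) \<le> B" if "w \<in> U" "j \<in> Basis" for w j
      using order_trans[OF norm_d_lx_flx_Basis_le bound] that by simp
  qed (use path continuous_on_d_lx_flx[OF cont] in auto)
  then have "min_norm_set (interval_mat (d_lx_flx F') U) * norm v \<le> min_norm (mat_apply A) * norm v"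
    by (intro mult_right_mono min_norm_set_le) auto
  also have "\<dots> \<le> norm (mat_apply A v)" by (rule min_norm_le)
  also have "mat_apply A v = integral {0..1} (\<lambda>t. d_lx_flx F' (p t) v)"
    unfolding A_def
    by (intro mat_apply_integral bounded_linear.linear[OF bounded_linear_d_lx_flx]
        continuous_on_d_lx_flx cont)
  finally show ?thesis .
qed

lemma xi_cu_le:
  fixes F' :: "('c::finite,'u::finite,'s::finite) pt \<Rightarrow> ('c,'u,'s) pt \<Rightarrow>\<^sub>L ('c,'u,'s) pt"
  assumes bound: "\<And>z. z \<in> cyl R \<Longrightarrow> norm (F' z) \<le> B" and m: "m \<in> cyl R"
  shows "xi_cu R L F' \<le> min_norm_set (interval_mat (d_lx_flx F') (Pset R m))
    - L * (SUP z\<in>cyl R. onorm (d_y_flx F' z))"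
proof -
  have "0 \<le> min_norm_set (interval_mat (d_lx_flx F') (Pset R z))" if z: "z \<in> cyl R" for z
  proof (rule min_norm_set_nonneg)
    have zP: "z \<in> Pset R z" using z by (simp add: Pset_def R_Lambda_def)
    have "(\<lambda>i j. integral {0..1::real} (\<lambda>t. d_lx_flx F' z j \<bullet> i)) \<in> interval_mat (d_lx_flx F') (Pset R z)"
    proof (rule interval_mat_average[where B="d_lx_flx F'" and p="\<lambda>t. z" and K=B])
      fix w and j :: "(real^'c) \<times> (real^'u)" assume "w \<in> Pset R z" "j \<in> Basis"
      then show "norm (d_lx_flx F' w j) \<le> B"
        using order_trans[OF norm_d_lx_flx_Basis_le bound] by (simp add: Pset_def)
    qed (simp_all add: zP)
    then show "interval_mat (d_lx_flx F') (Pset R z) \<noteq> {}" by blast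
  qed
  then have "(INF z\<in>cyl R. min_norm_set (interval_mat (d_lx_flx F') (Pset R z)))
      \<le> min_norm_set (interval_mat (d_lx_flx F') (Pset R m))"
    by (intro cINF_lower[OF _ m] bdd_belowI2[where m=0])
  then show ?thesis unfolding xi_cu_def by simp
qed

lemma norm_integral_d_y_flx_le:
  fixes F' :: "('c::finite,'u::finite,'s::finite) pt \<Rightarrow> ('c,'u,'s) pt \<Rightarrow>\<^sub>L ('c,'u,'s) pt"
    and p :: "real \<Rightarrow> ('c,'u,'s) pt"
  assumes bound: "\<And>z. z \<in> cyl R \<Longrightarrow> norm (F' z) \<le> B"
    and path: "\<And>t. t \<in> {0..1} \<Longrightarrow> p t \<in> cyl R"
    and cont: "continuous_on {0..1} (\<lambda>t. F' (p t))"
    and u: "norm u \<le> r"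
  shows "norm (integral {0..1} (\<lambda>t. d_y_flx F' (p t) u)) \<le> (SUP z\<in>cyl R. onorm (d_y_flx F' z)) * r"
proof -
  define S where "S = (SUP z\<in>cyl R. onorm (d_y_flx F' z))"
  have "onorm (d_y_flx F' z) \<le> B" if "z \<in> cyl R" for z
    by (intro onorm_le order_trans[OF norm_d_y_flx_le] mult_right_mono bound that norm_ge_zero)
  then have onorm_le_S: "onorm (d_y_flx F' z) \<le> S" if "z \<in> cyl R" for z
    unfolding S_def by (intro cSUP_upper[OF that] bdd_aboveI2[where M=B])
  have "norm (d_y_flx F' (p t) u) \<le> S * r" if "t \<in> {0..1}" for t
  proof -
    have "norm (d_y_flx F' (p t) u) \<le> onorm (d_y_flx F' (p t)) * norm u"
      by (rule onorm[OF bounded_linear_d_y_flx])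
    also have "\<dots> \<le> S * r"
      using onorm_le_S[OF path[OF that]] u
        order_trans[OF onorm_pos_le[OF bounded_linear_d_y_flx] onorm_le_S[OF path[OF that]]]
      by (intro mult_mono) auto
    finally show ?thesis .
  qed
  then show ?thesis
    using integral_bound[of 0 1 "\<lambda>t. d_y_flx F' (p t) u" "S * r"] continuous_on_d_y_flx[OF cont]
    unfolding S_def by simp
qed

theorem lemma4p7:
  fixes F :: "('c::finite,'u::finite,'s::finite) pt \<Rightarrow> ('c,'u,'s) pt"
    and F' :: "('c,'u,'s) pt \<Rightarrow> ('c,'u,'s) pt \<Rightarrow>\<^sub>L ('c,'u,'s) pt"
    and R L :: real and z1 z2 :: "('c,'u,'s) pt"
  assumes R: "0 < R" "R < R_Lambda / 2"
    and L: "2 * R / R_Lambda < L" "L < 1"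
    and deriv: "\<forall>z\<in>cyl R. (F has_derivative blinfun_apply (F' z)) (at z within cyl R)"
    and cont: "continuous_on (cyl R) F'"
    and periodic: "\<forall>k l x y. (\<forall>i. k $ i \<in> \<int>) \<longrightarrow> norm x \<le> R \<longrightarrow> norm y \<le> R \<longrightarrow>
        (\<forall>i. (fst (F (l + k, x, y)) - fst (F (l, x, y))) $ i \<in> \<int>) \<and>
        snd (F (l + k, x, y)) = snd (F (l, x, y))"
    and z1: "z1 \<in> cyl R" and z2: "z2 \<in> cyl R"
    and chart: "norm (fst z1 - fst z2) \<le> R_Lambda"
    and rate1: "mu_s R L F' < 1" "1 < xi_u R L F'"
    and rate2: "mu_cs R L F' < xi_u R L F'"
    and rate3: "mu_s R L F' < xi_cu R L F'"
    and J: "z1 \<in> Jcu z2 L"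
  shows "norm (pr_lx (F z1) - pr_lx (F z2)) \<ge> xi_cu R L F' * norm (pr_lx z1 - pr_lx z2)"
proof -
  obtain B where B: "\<And>z. z \<in> cyl R \<Longrightarrow> norm (F' z) \<le> B"
    using deck_periodic_derivative_bounded[OF R(1) deriv cont] periodic
    unfolding deck_periodic_def by blast
  define p where "p t = z2 + t *\<^sub>R (z1 - z2)" for t
  define m where "m = p (1/2)"
  define v where "v = pr_lx z1 - pr_lx z2"
  define u where "u = snd (snd z1) - snd (snd z2)"
  define S where "S = (SUP z\<in>cyl R. onorm (d_y_flx F' z))"
  define I_lx where "I_lx = integral {0..1} (\<lambda>t. d_lx_flx F' (p t) v)"
  define I_y where "I_y = integral {0..1} (\<lambda>t. d_y_flx F' (p t) u)"
  have path: "p t \<in> Pset R m" "p t \<in> cyl R" if "t \<in> {0..1}" for t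
    using segment_in_Pset_midpoint[OF z1 z2 chart that] that unfolding p_def m_def Pset_def by auto
  have cont_path: "continuous_on {0..1} (\<lambda>t. F' (p t))"
    using path(2) unfolding p_def by (intro continuous_on_compose2[OF cont] continuous_intros) auto
  have "xi_cu R L F' * norm v \<le> (min_norm_set (interval_mat (d_lx_flx F') (Pset R m)) - L * S) * norm v"
    using xi_cu_le[OF B path(2)] unfolding m_def S_def by (intro mult_right_mono) auto
  also have "\<dots> \<le> norm I_lx - norm I_y"
    using min_norm_set_integral_d_lx_flx_le[OF _ path(1) cont_path, of B v]
      norm_integral_d_y_flx_le[OF B path(2) cont_path Jcu_cone[OF J]] B
    unfolding I_lx_def I_y_def S_def u_def v_def by (auto simp: algebra_simps Pset_def)
  also have "\<dots> \<le> norm (I_lx + I_y)" by (rule norm_diff_ineq)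
  also have "I_lx + I_y = pr_lx (F z1) - pr_lx (F z2)"
    using lx_increment_integral[OF deriv cont z1 z2]
    unfolding I_lx_def I_y_def p_def v_def u_def by (simp add: pr_lx_diff)
  finally show ?thesis unfolding v_def .
qed

end
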